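(* Let $r,d$ be positive integers with $n=(r+1)d\geq 3$. Then $\Delta_d^t\left(C_{(r+1)d}^r\right)\simeq\mathbb{S}^{r-1}$.
   Context: All graphs are finite and simple; $\alpha(G)$ is the independence number and $G[S]$ the induced subgraph on $S$. $\Delta_d^t(G)=\{\sigma\subseteq V(G):\ \alpha(G[V(G)\setminus\sigma])\geq d\}$. $C_n$ is the cycle on $\{1,\dots,n\}$ with edges $\{i,i+1\}$ and $\{1,n\}$; $C_n^r$ is the graph on the same vertices where distinct vertices are adjacent iff their distance in $C_n$ is at most $r$. *)

theory Defs
  imports "HOL-Analysis.Analysis"
begin

definition independent :: "('a \<Rightarrow> 'a \<Rightarrow> bool) \<Rightarrow> 'a set \<Rightarrow> bool" where
  "independent E I \<longleftrightarrow> (\<forall>x\<in>I. \<forall>y\<in>I. \<not> E x y)"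

definition indep_num :: "('a \<Rightarrow> 'a \<Rightarrow> bool) \<Rightarrow> 'a set \<Rightarrow> nat" where
  "indep_num E S = Max {card I | I. I \<subseteq> S \<and> independent E I}"

definition Delta_t :: "nat \<Rightarrow> 'a set \<Rightarrow> ('a \<Rightarrow> 'a \<Rightarrow> bool) \<Rightarrow> 'a set set" where
  "Delta_t d V E = {\<sigma>. \<sigma> \<subseteq> V \<and> indep_num E (V - \<sigma>) \<ge> d}"

definition cycdist :: "nat \<Rightarrow> nat \<Rightarrow> nat \<Rightarrow> nat" where
  "cycdist n i j = min (if i \<le> j then j - i else i - j) (n - (if i \<le> j then j - i else i - j))"

definition cycpow_edge :: "nat \<Rightarrow> nat \<Rightarrow> nat \<Rightarrow> nat \<Rightarrow> bool" where
  "cycpow_edge n r i j \<longleftrightarrow> i \<in> {1..n} \<and> j \<in> {1..n} \<and> i \<noteq> j \<and> cycdist n i j \<le> r"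

text \<open>Geometric realization of an abstract simplicial complex K on vertices of type 'a:
  points are finitely supported nonnegative weight functions summing to 1 whose
  support is a face of K, with the topology inherited from the product topology.\<close>
definition geom_real :: "'a set set \<Rightarrow> ('a \<Rightarrow> real) set" where
  "geom_real K = {f. (\<forall>i. 0 \<le> f i) \<and> {i. f i \<noteq> 0} \<in> K \<and> finite {i. f i \<noteq> 0}
                     \<and> sum f {i. f i \<noteq> 0} = 1}"

definition geom_real_top :: "'a set set \<Rightarrow> ('a \<Rightarrow> real) topology" where
  "geom_real_top K = subtopology (powertop_real UNIV) (geom_real K)"

end

theory Submission
  imports Defs
begin

(* The residue classes mod r+1 of the vertices of C_{(r+1)d}^r are independent sets of size d.
   Conversely an independent set of size at least d meets each block of r+1 consecutive
   vertices exactly once, and the gaps (including the one across the wrap-around) force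
   these vertices to be equally spaced, i.e. to form a residue class. Hence the faces of
   Delta_d^t are exactly the vertex sets missing some residue class. Summing the weights of
   each class maps the realisation onto the boundary of the r-simplex; spreading them
   uniformly back is a section, and the straight-line homotopy from spread-after-sum to the
   identity keeps the missing class empty. Finally, radial projection from the barycentre
   identifies the boundary of the r-simplex with the (r-1)-sphere. *)

section \<open>Complexes of vertex sets missing a colour\<close>

definition missing_colour_complex :: "'a set \<Rightarrow> ('a \<Rightarrow> nat) \<Rightarrow> nat \<Rightarrow> 'a set set" where
  "missing_colour_complex V c r = {\<sigma>. \<sigma> \<subseteq> V \<and> (\<exists>j\<le>r. j \<notin> c ` \<sigma>)}"

definition simplex_boundary :: "nat \<Rightarrow> (nat \<Rightarrow> real) set" where
  "simplex_boundary n =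
     {x. (\<forall>i. 0 \<le> x i) \<and> (\<forall>i>n. x i = 0) \<and> sum x {..n} = 1 \<and> (\<exists>j\<le>n. x j = 0)}"

definition colour_mass :: "'a set \<Rightarrow> ('a \<Rightarrow> nat) \<Rightarrow> ('a \<Rightarrow> real) \<Rightarrow> nat \<Rightarrow> real" where
  "colour_mass V c f j = sum f {v \<in> V. c v = j}"

definition colour_spread :: "'a set \<Rightarrow> ('a \<Rightarrow> nat) \<Rightarrow> (nat \<Rightarrow> real) \<Rightarrow> 'a \<Rightarrow> real" where
  "colour_spread V c x v = (if v \<in> V then x (c v) / card {w \<in> V. c w = c v} else 0)"

lemma continuous_map_powertop_coordinate [continuous_intros]:
  "continuous_map (subtopology (powertop_real UNIV) S) euclideanreal (\<lambda>f. f i)"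
  by (rule continuous_map_from_subtopology) (metis continuous_map_product_projection UNIV_I)

lemma homotopic_with_linear_powertop:
  assumes f: "continuous_map X (powertop_real UNIV) f"
    and g: "continuous_map X (powertop_real UNIV) g"
    and segment: "\<And>x t. x \<in> topspace X \<Longrightarrow> 0 \<le> t \<Longrightarrow> t \<le> 1 \<Longrightarrow>
                     (\<lambda>i. (1 - t) * f x i + t * g x i) \<in> S"
  shows "homotopic_with (\<lambda>_. True) X (subtopology (powertop_real UNIV) S) f g"
proof -
  define h where "h p = (\<lambda>i. (1 - fst p) * f (snd p) i + fst p * g (snd p) i)" for p
  let ?T = "prod_topology (top_of_set {0..1::real}) X"
  have "continuous_map ?T euclideanreal (\<lambda>p. h p i)" for i
  proof -
    have "continuous_map X euclideanreal (\<lambda>x. f x i)" "continuous_map X euclideanreal (\<lambda>x. g x i)"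
      using f g by (simp_all add: continuous_map_componentwise_UNIV)
    then have "continuous_map ?T euclideanreal (\<lambda>p. f (snd p) i)"
              "continuous_map ?T euclideanreal (\<lambda>p. g (snd p) i)"
      by (auto intro: continuous_map_compose[OF continuous_map_snd, unfolded o_def])
    moreover have "continuous_map ?T euclideanreal fst"
      by (rule continuous_map_into_fulltopology[OF continuous_map_fst])
    ultimately show ?thesis
      unfolding h_def by (intro continuous_intros)
  qed
  moreover have "h p \<in> S" if "p \<in> topspace ?T" for p
    using that segment by (auto simp: h_def)
  ultimately have "continuous_map ?T (subtopology (powertop_real UNIV) S) h"
    unfolding continuous_map_in_subtopology continuous_map_componentwise_UNIV by blast
  then show ?thesis
    unfolding homotopic_with_def by (intro exI[of _ h]) (simp add: h_def)
qed

lemma geom_real_missing_colour_complex_iff: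
  assumes "finite V"
  shows "f \<in> geom_real (missing_colour_complex V c r) \<longleftrightarrow>
           (\<forall>i. 0 \<le> f i) \<and> (\<forall>i. i \<notin> V \<longrightarrow> f i = 0) \<and> sum f V = 1 \<and>
           (\<exists>j\<le>r. \<forall>v\<in>V. c v = j \<longrightarrow> f v = 0)"
proof -
  define S where "S = {i. f i \<noteq> 0}"
  have "S \<subseteq> V \<longleftrightarrow> (\<forall>i. i \<notin> V \<longrightarrow> f i = 0)"
    by (auto simp: S_def)
  moreover have "finite S \<and> sum f S = sum f V" if "S \<subseteq> V"
    using that assms by (auto intro: finite_subset sum.mono_neutral_left simp: S_def)
  moreover have "j \<notin> c ` S \<longleftrightarrow> (\<forall>v\<in>V. c v = j \<longrightarrow> f v = 0)" if "S \<subseteq> V" for j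
    using that by (auto simp: S_def)
  ultimately show ?thesis
    unfolding geom_real_def missing_colour_complex_def mem_Collect_eq S_def[symmetric] by auto
qed

lemma continuous_map_colour_mass:
  assumes "finite V"
  shows "continuous_map (subtopology (powertop_real UNIV) S) (powertop_real UNIV) (colour_mass V c)"
  unfolding continuous_map_componentwise_UNIV colour_mass_def
  using assms by (auto intro!: continuous_intros)

lemma continuous_map_colour_spread:
  "continuous_map (subtopology (powertop_real UNIV) S) (powertop_real UNIV) (colour_spread V c)"
  unfolding continuous_map_componentwise_UNIV
proof
  fix v
  have "continuous_map (subtopology (powertop_real UNIV) S) euclideanreal
          (\<lambda>x. inverse (card {w \<in> V. c w = c v}) * x (c v))"
    by (intro continuous_map_real_mult_left continuous_map_powertop_coordinate)
  then show "continuous_map (subtopology (powertop_real UNIV) S) euclideanreal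
               (\<lambda>x. colour_spread V c x v)"
    by (cases "v \<in> V") (simp_all add: colour_spread_def divide_inverse mult.commute)
qed

context
  fixes V :: "'a set" and c :: "'a \<Rightarrow> nat" and r :: nat
  assumes finite_V: "finite V" and colours: "c ` V = {..r}"
begin

lemma sum_colour_mass: "(\<Sum>j\<le>r. colour_mass V c f j) = sum f V"
  unfolding colour_mass_def
  using sum.group[OF finite_V finite_atMost, where g = c and h = f] colours by simp

lemma colour_mass_eq_0:
  assumes "r < j"
  shows "colour_mass V c f j = 0"
proof -
  have "c v \<le> r" if "v \<in> V" for v
    using colours that by (metis atMost_iff imageI)
  then have "{v \<in> V. c v = j} = {}"
    using assms by fastforce
  then show ?thesis
    unfolding colour_mass_def by (metis sum.empty)
qed

lemma colour_mass_spread: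
  assumes "j \<le> r"
  shows "colour_mass V c (colour_spread V c x) j = x j"
proof -
  have "{v \<in> V. c v = j} \<noteq> {}"
    using assms colours by (metis (mono_tags, lifting) atMost_iff empty_Collect_eq imageE)
  then have "card {v \<in> V. c v = j} \<noteq> 0"
    using finite_V by simp
  moreover have "colour_mass V c (colour_spread V c x) j =
                   (\<Sum>v\<in>{v \<in> V. c v = j}. x j / card {v \<in> V. c v = j})"
    unfolding colour_mass_def colour_spread_def by (intro sum.cong) auto
  ultimately show ?thesis
    by simp
qed

lemma colour_mass_in_simplex_boundary:
  assumes "f \<in> geom_real (missing_colour_complex V c r)"
  shows "colour_mass V c f \<in> simplex_boundary r"
proof -
  from assms obtain j where "j \<le> r" "\<forall>v\<in>V. c v = j \<longrightarrow> f v = 0"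
    and f: "\<forall>i. 0 \<le> f i" "sum f V = 1"
    unfolding geom_real_missing_colour_complex_iff[OF finite_V] by blast
  then have "colour_mass V c f j = 0"
    by (simp add: colour_mass_def)
  moreover have "\<forall>i. 0 \<le> colour_mass V c f i"
    using f(1) by (simp add: colour_mass_def sum_nonneg)
  moreover have "sum (colour_mass V c f) {..r} = 1"
    using f(2) by (simp add: sum_colour_mass)
  ultimately show ?thesis
    using \<open>j \<le> r\<close> colour_mass_eq_0 unfolding simplex_boundary_def by blast
qed

lemma colour_spread_in_geom_real:
  assumes "x \<in> simplex_boundary r"
  shows "colour_spread V c x \<in> geom_real (missing_colour_complex V c r)"
proof -
  obtain j where "j \<le> r" "x j = 0" and x: "\<forall>i. 0 \<le> x i" "sum x {..r} = 1"
    using assms by (auto simp: simplex_boundary_def)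
  have "sum (colour_spread V c x) V = 1"
    using x by (simp add: sum_colour_mass[symmetric] colour_mass_spread)
  with \<open>j \<le> r\<close> \<open>x j = 0\<close> x show ?thesis
    unfolding geom_real_missing_colour_complex_iff[OF finite_V]
    by (auto simp: colour_spread_def)
qed

lemma colour_mass_spread_eq:
  assumes "x \<in> simplex_boundary r"
  shows "colour_mass V c (colour_spread V c x) = x"
proof
  fix j
  show "colour_mass V c (colour_spread V c x) j = x j"
  proof (cases "j \<le> r")
    case False
    then show ?thesis
      using assms colour_mass_eq_0 by (simp add: simplex_boundary_def)
  qed (rule colour_mass_spread)
qed

lemma segment_colour_spread_mass_in_geom_real:
  assumes "f \<in> geom_real (missing_colour_complex V c r)" "0 \<le> t" "t \<le> 1"
  shows "(\<lambda>v. (1 - t) * colour_spread V c (colour_mass V c f) v + t * f v)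
           \<in> geom_real (missing_colour_complex V c r)"
proof -
  let ?g = "colour_spread V c (colour_mass V c f)"
  obtain j where j: "j \<le> r" "\<forall>v\<in>V. c v = j \<longrightarrow> f v = 0"
    and f: "\<forall>i. 0 \<le> f i" "\<forall>i. i \<notin> V \<longrightarrow> f i = 0" "sum f V = 1"
    using assms(1) unfolding geom_real_missing_colour_complex_iff[OF finite_V] by blast
  have g: "\<forall>i. 0 \<le> ?g i" "\<forall>i. i \<notin> V \<longrightarrow> ?g i = 0" "sum ?g V = 1"
    using colour_spread_in_geom_real[OF colour_mass_in_simplex_boundary[OF assms(1)]]
    unfolding geom_real_missing_colour_complex_iff[OF finite_V] by blast+
  have "\<forall>v\<in>V. c v = j \<longrightarrow> ?g v = 0"
    using j by (simp add: colour_spread_def colour_mass_def)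
  moreover have "sum (\<lambda>v. (1 - t) * ?g v + t * f v) V = 1"
    using f g by (simp add: sum.distrib sum_distrib_left[symmetric])
  ultimately show ?thesis
    unfolding geom_real_missing_colour_complex_iff[OF finite_V]
    using j f g assms(2,3) by auto
qed

theorem geom_real_missing_colour_complex_homotopy_equivalent:
  "geom_real_top (missing_colour_complex V c r)
     homotopy_equivalent_space subtopology (powertop_real UNIV) (simplex_boundary r)"
proof -
  let ?K = "missing_colour_complex V c r"
  let ?X = "geom_real_top ?K" and ?Y = "subtopology (powertop_real UNIV) (simplex_boundary r)"
  have mass: "continuous_map ?X ?Y (colour_mass V c)"
    unfolding geom_real_top_def continuous_map_in_subtopology
    using continuous_map_colour_mass[OF finite_V] colour_mass_in_simplex_boundary by simp
  have spread: "continuous_map ?Y ?X (colour_spread V c)"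
    unfolding geom_real_top_def continuous_map_in_subtopology
    using continuous_map_colour_spread colour_spread_in_geom_real by simp
  have "homotopic_with (\<lambda>_. True) ?X ?X (colour_spread V c \<circ> colour_mass V c) id"
    unfolding geom_real_top_def
  proof (rule homotopic_with_linear_powertop)
    show "continuous_map (subtopology (powertop_real UNIV) (geom_real ?K)) (powertop_real UNIV)
            (colour_spread V c \<circ> colour_mass V c)"
      using continuous_map_compose[OF mass spread]
      unfolding geom_real_top_def by (rule continuous_map_into_fulltopology)
  next
    fix f and t :: real
    assume "f \<in> topspace (subtopology (powertop_real UNIV) (geom_real ?K))" "0 \<le> t" "t \<le> 1"
    then show "(\<lambda>i. (1 - t) * (colour_spread V c \<circ> colour_mass V c) f i + t * id f i)
                 \<in> geom_real ?K"
      using segment_colour_spread_mass_in_geom_real[of f t] by simp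
  qed simp
  moreover have "homotopic_with (\<lambda>_. True) ?Y ?Y (colour_mass V c \<circ> colour_spread V c) id"
    using colour_mass_spread_eq
    by (intro homotopic_with_equal continuous_map_compose[OF spread mass]) simp_all
  ultimately show ?thesis
    unfolding homotopy_equivalent_space_def using mass spread by (intro exI conjI)
qed

end

section \<open>The boundary of a simplex is a sphere\<close>

lemma mem_topspace_nsphere:
  "u \<in> topspace (nsphere p) \<longleftrightarrow> (\<Sum>i\<le>p. u i ^ 2) = 1 \<and> (\<forall>i>p. u i = 0)"
  by (simp add: nsphere)

lemma continuous_map_Min_atMost:
  fixes k :: nat
  assumes "\<And>i. continuous_map X euclideanreal (\<lambda>x. F x i)"
  shows "continuous_map X euclideanreal (\<lambda>x. Min (F x ` {..k}))"
proof (induction k)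
  case 0
  then show ?case
    using assms by simp
next
  case (Suc k)
  have "Min (F x ` {..Suc k}) = min (F x (Suc k)) (Min (F x ` {..k}))" for x
    by (simp add: atMost_Suc)
  then show ?case
    using Suc assms by (simp add: continuous_map_real_min)
qed

(* Coordinates 0..p parametrise the hyperplane sum x = 1 of the simplex with vertices 0..Suc p.
   simplex_to_sphere is radial projection from the barycentre in these coordinates;
   zero_sum_extension restores the dropped coordinate of a direction u, and sphere_to_simplex
   moves from the barycentre along that direction until the smallest coordinate reaches 0. *)

definition barycentre_coord :: "nat \<Rightarrow> real" where
  "barycentre_coord p = 1 / (real p + 2)"

definition centred_norm :: "nat \<Rightarrow> (nat \<Rightarrow> real) \<Rightarrow> real" where
  "centred_norm p x = sqrt (\<Sum>k\<le>p. (x k - barycentre_coord p)\<^sup>2)"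

definition simplex_to_sphere :: "nat \<Rightarrow> (nat \<Rightarrow> real) \<Rightarrow> nat \<Rightarrow> real" where
  "simplex_to_sphere p x i =
     (if i \<le> p then (x i - barycentre_coord p) / centred_norm p x else 0)"

definition zero_sum_extension :: "nat \<Rightarrow> (nat \<Rightarrow> real) \<Rightarrow> nat \<Rightarrow> real" where
  "zero_sum_extension p u i =
     (if i \<le> p then u i else if i = Suc p then - (\<Sum>k\<le>p. u k) else 0)"

definition sphere_to_simplex :: "nat \<Rightarrow> (nat \<Rightarrow> real) \<Rightarrow> nat \<Rightarrow> real" where
  "sphere_to_simplex p u i =
     (if i \<le> Suc p
      then (1 - zero_sum_extension p u i / Min (zero_sum_extension p u ` {..Suc p})) / (real p + 2)
      else 0)"

lemma barycentre_coord_pos: "0 < barycentre_coord p"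
  by (simp add: barycentre_coord_def)

lemma sum_barycentre_coord: "(\<Sum>k\<le>p. barycentre_coord p) + barycentre_coord p = 1"
  unfolding barycentre_coord_def by (simp add: field_simps)

lemma centred_norm_pos:
  assumes x: "x \<in> simplex_boundary (Suc p)"
  shows "0 < centred_norm p x"
proof (rule ccontr)
  let ?b = "barycentre_coord p"
  assume "\<not> 0 < centred_norm p x"
  then have "(\<Sum>k\<le>p. (x k - ?b)\<^sup>2) = 0"
    by (simp add: centred_norm_def sum_nonneg antisym)
  then have centre: "x k = ?b" if "k \<le> p" for k
    using that by (simp add: sum_nonneg_eq_0_iff)
  have "(\<Sum>k\<le>p. x k) + x (Suc p) = 1"
    using x by (simp add: simplex_boundary_def)
  moreover have "(\<Sum>k\<le>p. x k) = (\<Sum>k\<le>p. ?b)"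
    using centre by simp
  ultimately have "x (Suc p) = ?b"
    using sum_barycentre_coord[of p] by linarith
  then have "\<forall>j\<le>Suc p. x j \<noteq> 0"
    using centre barycentre_coord_pos[of p] by (auto simp: le_Suc_eq)
  then show False
    using x by (auto simp: simplex_boundary_def)
qed

lemma simplex_to_sphere_in_nsphere:
  assumes "x \<in> simplex_boundary (Suc p)"
  shows "simplex_to_sphere p x \<in> topspace (nsphere p)"
proof -
  have N: "(centred_norm p x)\<^sup>2 = (\<Sum>k\<le>p. (x k - barycentre_coord p)\<^sup>2)"
    by (simp add: centred_norm_def sum_nonneg)
  have "(\<Sum>i\<le>p. (simplex_to_sphere p x i)\<^sup>2) =
          (\<Sum>i\<le>p. (x i - barycentre_coord p)\<^sup>2) / (centred_norm p x)\<^sup>2"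
    by (simp add: simplex_to_sphere_def power_divide sum_divide_distrib)
  also have "\<dots> = 1"
    using centred_norm_pos[OF assms] by (simp add: N[symmetric])
  finally show ?thesis
    by (simp add: mem_topspace_nsphere simplex_to_sphere_def)
qed

lemma sum_zero_sum_extension: "(\<Sum>i\<le>Suc p. zero_sum_extension p u i) = 0"
  by (simp add: zero_sum_extension_def)

lemma Min_zero_sum_extension_neg:
  assumes u: "u \<in> topspace (nsphere p)"
  shows "Min (zero_sum_extension p u ` {..Suc p}) < 0"
proof (rule ccontr)
  assume "\<not> ?thesis"
  then have "\<forall>i\<in>{..Suc p}. 0 \<le> zero_sum_extension p u i"
    by (meson Min_le finite_atMost finite_imageI image_eqI le_less_trans not_le)
  then have "\<forall>i\<in>{..Suc p}. zero_sum_extension p u i = 0"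
    using sum_zero_sum_extension[of p u] by (metis finite_atMost sum_nonneg_eq_0_iff)
  moreover have "u i = zero_sum_extension p u i" if "i \<le> p" for i
    using that by (simp add: zero_sum_extension_def)
  ultimately have "\<forall>i\<le>p. u i = 0"
    by (metis atMost_iff le_SucI)
  then show False
    using u by (simp add: mem_topspace_nsphere)
qed

lemma sphere_to_simplex_in_simplex_boundary:
  assumes u: "u \<in> topspace (nsphere p)"
  shows "sphere_to_simplex p u \<in> simplex_boundary (Suc p)"
proof -
  let ?w = "zero_sum_extension p u"
  define m where "m = Min (?w ` {..Suc p})"
  have m: "m < 0"
    using Min_zero_sum_extension_neg[OF u] by (simp add: m_def)
  have "m \<in> ?w ` {..Suc p}"
    unfolding m_def by (rule Min_in) auto
  then obtain j where "j \<le> Suc p" "?w j = m"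
    by auto
  then have "sphere_to_simplex p u j = 0"
    using m by (simp add: sphere_to_simplex_def m_def[symmetric])
  moreover have "0 \<le> sphere_to_simplex p u i" for i
  proof (cases "i \<le> Suc p")
    case True
    then have "m \<le> ?w i"
      by (simp add: m_def)
    then have "?w i / m \<le> 1"
      using m by simp
    then show ?thesis
      using True by (simp add: sphere_to_simplex_def m_def[symmetric])
  qed (simp add: sphere_to_simplex_def)
  moreover have "(\<Sum>i\<le>Suc p. sphere_to_simplex p u i) = 1"
  proof -
    have "(\<Sum>i\<le>Suc p. sphere_to_simplex p u i) = (\<Sum>i\<le>Suc p. (1 - ?w i / m) / (real p + 2))"
      by (simp add: sphere_to_simplex_def m_def del: sum.atMost_Suc)
    also have "\<dots> = (real p + 2 - (\<Sum>i\<le>Suc p. ?w i) / m) / (real p + 2)"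
      by (simp add: sum_divide_distrib[symmetric] sum_subtractf del: sum.atMost_Suc)
    also have "\<dots> = 1"
      by (simp add: sum_zero_sum_extension del: sum.atMost_Suc)
    finally show ?thesis .
  qed
  ultimately show ?thesis
    using \<open>j \<le> Suc p\<close> by (auto simp: simplex_boundary_def sphere_to_simplex_def)
qed

lemma sphere_to_simplex_simplex_to_sphere:
  assumes x: "x \<in> simplex_boundary (Suc p)"
  shows "sphere_to_simplex p (simplex_to_sphere p x) = x"
proof
  fix i
  let ?b = "barycentre_coord p" and ?N = "centred_norm p x"
  let ?w = "zero_sum_extension p (simplex_to_sphere p x)"
  have N: "0 < ?N"
    by (rule centred_norm_pos[OF x])
  have x0: "\<forall>i. 0 \<le> x i" "\<forall>i>Suc p. x i = 0" "(\<Sum>k\<le>p. x k) + x (Suc p) = 1"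
    "\<exists>j\<le>Suc p. x j = 0"
    using x by (simp_all add: simplex_boundary_def)
  have w: "?w k = (x k - ?b) / ?N" if "k \<le> Suc p" for k
  proof (cases "k \<le> p")
    case False
    then have "k = Suc p"
      using that by simp
    moreover have "(\<Sum>k\<le>p. x k - ?b) = ?b - x (Suc p)"
      using x0(3) sum_barycentre_coord[of p] by (simp add: sum_subtractf)
    ultimately show ?thesis
      using N by (simp add: zero_sum_extension_def simplex_to_sphere_def
          sum_divide_distrib[symmetric] field_simps)
  qed (simp add: zero_sum_extension_def simplex_to_sphere_def)
  have Min: "Min (?w ` {..Suc p}) = - ?b / ?N"
  proof (rule Min_eqI)
    fix y assume "y \<in> ?w ` {..Suc p}"
    then obtain k where "y = (x k - ?b) / ?N"
      using w by auto
    moreover have "- ?b / ?N \<le> (x k - ?b) / ?N"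
      using x0(1) N by (intro divide_right_mono) auto
    ultimately show "- ?b / ?N \<le> y"
      by simp
  next
    obtain j where "j \<le> Suc p" "x j = 0"
      using x0(4) by blast
    then show "- ?b / ?N \<in> ?w ` {..Suc p}"
      using w by (intro image_eqI[of _ _ j]) simp_all
  qed simp
  show "sphere_to_simplex p (simplex_to_sphere p x) i = x i"
  proof (cases "i \<le> Suc p")
    case True
    then have "sphere_to_simplex p (simplex_to_sphere p x) i =
                 (1 - ?w i / Min (?w ` {..Suc p})) / (real p + 2)"
      by (simp add: sphere_to_simplex_def)
    also have "\<dots> = (1 - ((x i - ?b) / ?N) / (- ?b / ?N)) / (real p + 2)"
      by (simp only: Min w[OF True])
    also have "\<dots> = (1 + (x i - ?b) * (real p + 2)) / (real p + 2)"
      using N by (simp add: barycentre_coord_def divide_simps)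
    also have "\<dots> = x i"
      by (simp add: barycentre_coord_def divide_simps)
    finally show ?thesis .
  qed (simp add: sphere_to_simplex_def x0(2))
qed

lemma simplex_to_sphere_sphere_to_simplex:
  assumes u: "u \<in> topspace (nsphere p)"
  shows "simplex_to_sphere p (sphere_to_simplex p u) = u"
proof
  fix i
  define m where "m = Min (zero_sum_extension p u ` {..Suc p})"
  have m: "m < 0"
    using Min_zero_sum_extension_neg[OF u] by (simp add: m_def)
  define l where "l = 1 / (- m * (real p + 2))"
  have l: "0 < l"
    using mult_neg_pos[OF m, of "real p + 2"] by (simp add: l_def)
  have shift: "sphere_to_simplex p u k - barycentre_coord p = l * u k" if "k \<le> p" for k
  proof -
    have "zero_sum_extension p u k = u k"
      using that by (simp add: zero_sum_extension_def)
    then have eq: "sphere_to_simplex p u k = (1 - u k / m) / (real p + 2)"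
      using that by (simp add: sphere_to_simplex_def m_def)
    have "m \<noteq> 0" "real p + 2 \<noteq> 0"
      using m by linarith+
    then show ?thesis
      unfolding eq by (simp add: barycentre_coord_def l_def divide_simps)
  qed
  have "centred_norm p (sphere_to_simplex p u) = sqrt (\<Sum>k\<le>p. (l * u k)\<^sup>2)"
    by (simp add: centred_norm_def shift)
  also have "\<dots> = sqrt (l\<^sup>2 * (\<Sum>k\<le>p. (u k)\<^sup>2))"
    by (simp add: power_mult_distrib sum_distrib_left)
  also have "\<dots> = l"
    using u l by (simp add: mem_topspace_nsphere)
  finally show "simplex_to_sphere p (sphere_to_simplex p u) i = u i"
    using shift l u by (simp add: simplex_to_sphere_def mem_topspace_nsphere)
qed

lemma continuous_map_simplex_to_sphere:
  "continuous_map (subtopology (powertop_real UNIV) (simplex_boundary (Suc p))) (nsphere p)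
     (simplex_to_sphere p)"
proof -
  let ?X = "subtopology (powertop_real UNIV) (simplex_boundary (Suc p))"
  have N: "continuous_map ?X euclideanreal (centred_norm p)"
    unfolding centred_norm_def by (intro continuous_intros) auto
  have "continuous_map ?X euclideanreal (\<lambda>x. simplex_to_sphere p x i)" for i
  proof (cases "i \<le> p")
    case True
    have "continuous_map ?X euclideanreal (\<lambda>x. (x i - barycentre_coord p) / centred_norm p x)"
      using centred_norm_pos by (intro continuous_intros N) force
    then show ?thesis
      using True by (simp add: simplex_to_sphere_def)
  qed (simp add: simplex_to_sphere_def)
  then show ?thesis
    unfolding nsphere continuous_map_in_subtopology continuous_map_componentwise_UNIV
    using simplex_to_sphere_in_nsphere by (simp add: mem_topspace_nsphere Pi_iff)
qed

lemma continuous_map_sphere_to_simplex: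
  "continuous_map (nsphere p) (subtopology (powertop_real UNIV) (simplex_boundary (Suc p)))
     (sphere_to_simplex p)"
proof -
  have w: "continuous_map (nsphere p) euclideanreal (\<lambda>u. zero_sum_extension p u i)" for i
    by (cases "i \<le> p"; cases "i = Suc p")
       (simp_all add: zero_sum_extension_def continuous_map_nsphere_projection
         continuous_map_minus continuous_map_sum)
  have "continuous_map (nsphere p) euclideanreal (\<lambda>u. sphere_to_simplex p u i)" for i
  proof (cases "i \<le> Suc p")
    case True
    have "continuous_map (nsphere p) euclideanreal (\<lambda>u.
            (1 - zero_sum_extension p u i / Min (zero_sum_extension p u ` {..Suc p})) / (real p + 2))"
      using Min_zero_sum_extension_neg
      by (intro continuous_intros w continuous_map_Min_atMost) force+
    then show ?thesis
      using True by (simp add: sphere_to_simplex_def)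
  qed (simp add: sphere_to_simplex_def)
  then show ?thesis
    using sphere_to_simplex_in_simplex_boundary
    unfolding continuous_map_in_subtopology continuous_map_componentwise_UNIV
    by (simp add: nsphere[symmetric] Pi_iff)
qed

theorem simplex_boundary_homeomorphic_nsphere:
  "subtopology (powertop_real UNIV) (simplex_boundary (Suc p)) homeomorphic_space nsphere p"
  unfolding homeomorphic_space_def homeomorphic_maps_def
  using continuous_map_simplex_to_sphere continuous_map_sphere_to_simplex
    sphere_to_simplex_simplex_to_sphere simplex_to_sphere_sphere_to_simplex
  by (intro exI[of _ "simplex_to_sphere p"] exI[of _ "sphere_to_simplex p"]) simp

section \<open>Independent sets of the cycle power\<close>

lemma cyclically_mono_imp_constant:
  fixes p :: "nat \<Rightarrow> 'a::order"
  assumes step: "\<And>k. Suc k < d \<Longrightarrow> p k \<le> p (Suc k)" and wrap: "p (d - 1) \<le> p 0"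
    and "k < d"
  shows "p k = p 0"
proof -
  have mono: "p i \<le> p j" if "i \<le> j" "j < d" for i j
  proof (rule lift_Suc_mono_le_ivl[where N = "{..<d - 1}" and f = p])
    show "p n \<le> p (Suc n)" if "n \<in> {..<d - 1}" for n
      using step that by simp
    show "{i..<j} \<subseteq> {..<d - 1}"
      using \<open>j < d\<close> by auto
  qed (rule \<open>i \<le> j\<close>)
  have "k \<le> d - 1" "d - 1 < d"
    using \<open>k < d\<close> by simp_all
  then have "p k \<le> p 0"
    using mono wrap by (blast intro: order_trans)
  moreover have "p 0 \<le> p k"
    using mono[of 0 k] \<open>k < d\<close> by simp
  ultimately show ?thesis
    by (rule order.antisym)
qed

lemma le_indep_num_iff:
  assumes "finite S"
  shows "k \<le> indep_num E S \<longleftrightarrow> (\<exists>I\<subseteq>S. independent E I \<and> k \<le> card I)"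
proof -
  let ?C = "{card I | I. I \<subseteq> S \<and> independent E I}"
  have "finite ?C"
    using assms by (auto intro: finite_subset[of _ "card ` Pow S"])
  moreover have "card {} \<in> ?C"
    by (auto simp: independent_def intro!: exI[of _ "{}"])
  ultimately show ?thesis
    unfolding indep_num_def by (subst Max_ge_iff) auto
qed

lemma cycdist_less:
  assumes "u < v"
  shows "cycdist n u v = min (v - u) (n - (v - u))" "cycdist n v u = min (v - u) (n - (v - u))"
  using assms by (auto simp: cycdist_def)

lemma independent_cycpow_iff:
  assumes "I \<subseteq> {1..n}"
  shows "independent (cycpow_edge n r) I \<longleftrightarrow>
           (\<forall>u\<in>I. \<forall>v\<in>I. u < v \<longrightarrow> r < v - u \<and> r < n - (v - u))"
proof -
  have "cycpow_edge n r u v \<longleftrightarrow> \<not> (r < v - u \<and> r < n - (v - u))"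
       "cycpow_edge n r v u \<longleftrightarrow> \<not> (r < v - u \<and> r < n - (v - u))"
    if "u \<in> I" "v \<in> I" "u < v" for u v
    using assms that cycdist_less[OF \<open>u < v\<close>, of n] by (auto simp: cycpow_edge_def min_def)
  moreover have "\<not> cycpow_edge n r u u" for u
    by (simp add: cycpow_edge_def)
  ultimately show ?thesis
    unfolding independent_def by (metis linorder_neqE_nat)
qed

lemma independent_cycpow_gap:
  assumes "independent (cycpow_edge n r) I" "I \<subseteq> {1..n}" "u \<in> I" "v \<in> I" "u < v"
  shows "r < v - u \<and> r < n - (v - u)"
proof -
  have "\<forall>u\<in>I. \<forall>v\<in>I. u < v \<longrightarrow> r < v - u \<and> r < n - (v - u)"
    using assms(1) by (simp only: independent_cycpow_iff[OF assms(2)])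
  then show ?thesis
    using assms(3-5) by blast
qed

definition residue_class :: "nat \<Rightarrow> nat \<Rightarrow> nat \<Rightarrow> nat set" where
  "residue_class r d j = {v \<in> {1..(r+1)*d}. (v - 1) mod (r + 1) = j}"

lemma residue_class_eq_image:
  assumes "j \<le> r"
  shows "residue_class r d j = (\<lambda>k. k * (r + 1) + j + 1) ` {..<d}"
proof (intro set_eqI iffI)
  fix v assume "v \<in> residue_class r d j"
  then have "1 \<le> v" "v - 1 < d * (r + 1)" "(v - 1) mod (r + 1) = j"
    by (auto simp: residue_class_def algebra_simps)
  moreover have "v - 1 = (v - 1) div (r + 1) * (r + 1) + (v - 1) mod (r + 1)"
    by (rule div_mult_mod_eq[symmetric])
  ultimately show "v \<in> (\<lambda>k. k * (r + 1) + j + 1) ` {..<d}"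
    by (intro image_eqI[of _ _ "(v - 1) div (r + 1)"]) (auto simp: less_mult_imp_div_less)
next
  fix v assume "v \<in> (\<lambda>k. k * (r + 1) + j + 1) ` {..<d}"
  then obtain k where k: "k < d" "v = k * (r + 1) + j + 1" by auto
  have "(k + 1) * (r + 1) \<le> d * (r + 1)"
    using k by (intro mult_le_mono1) simp
  then have "1 \<le> v" "v \<le> (r + 1) * d"
    using k assms by (simp_all add: algebra_simps)
  moreover have "v - 1 = j + k * (r + 1)"
    using k by simp
  then have "(v - 1) mod (r + 1) = j"
    using assms by (simp only: mod_mult_self1) simp
  ultimately show "v \<in> residue_class r d j"
    by (simp add: residue_class_def)
qed

lemma card_residue_class:
  assumes "j \<le> r"
  shows "card (residue_class r d j) = d"
proof -
  have "inj_on (\<lambda>k. k * (r + 1) + j + 1) {..<d}"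
    by (rule inj_onI) (metis add_right_cancel mult_right_cancel add_is_0 one_neq_zero)
  then show ?thesis
    by (simp add: residue_class_eq_image[OF assms] card_image)
qed

lemma independent_residue_class:
  "independent (cycpow_edge ((r+1)*d) r) (residue_class r d j)"
proof -
  have "residue_class r d j \<subseteq> {1..(r+1)*d}"
    by (auto simp: residue_class_def)
  moreover have "r < v - u \<and> r < (r + 1) * d - (v - u)"
    if u: "u \<in> residue_class r d j" and v: "v \<in> residue_class r d j" and "u < v" for u v
  proof -
    have u1: "1 \<le> u" and vn: "v \<le> (r + 1) * d"
      and eq: "(v - 1) mod (r + 1) = (u - 1) mod (r + 1)"
      using u v by (simp_all add: residue_class_def)
    have "u - 1 \<le> v - 1"
      using \<open>u < v\<close> by simp
    then have "(r + 1) dvd (v - 1) - (u - 1)"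
      using mod_eq_dvd_iff_nat eq by blast
    moreover have "(v - 1) - (u - 1) = v - u"
      using u1 by simp
    ultimately have dvd: "(r + 1) dvd v - u"
      by simp
    then have "(r + 1) dvd (r + 1) * d - (v - u)"
      by (rule dvd_diff_nat[OF dvd_triv_left])
    moreover have "0 < (r + 1) * d - (v - u)" "0 < v - u"
      using u1 vn \<open>u < v\<close> by simp_all
    ultimately have "r + 1 \<le> (r + 1) * d - (v - u)" "r + 1 \<le> v - u"
      using dvd by (simp_all add: dvd_imp_le)
    then show ?thesis
      by simp
  qed
  ultimately show ?thesis
    by (simp add: independent_cycpow_iff)
qed

(* (v - 1) div (r + 1) = k says that v lies in the block {k(r+1)+1, ..., (k+1)(r+1)}. *)

lemma inj_on_block_index:
  assumes "independent (cycpow_edge n r) I" "I \<subseteq> {1..n}"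
  shows "inj_on (\<lambda>v. (v - 1) div (r + 1)) I"
proof (rule linorder_inj_onI')
  fix u v assume uv: "u \<in> I" "v \<in> I" "u < v"
  have far: "r < v - u" "1 \<le> u"
    using independent_cycpow_gap[OF assms uv] assms(2) uv(1) by auto
  have v: "(v - 1) div (r + 1) * (r + 1) + (v - 1) mod (r + 1) = v - 1"
    and u: "(u - 1) div (r + 1) * (r + 1) + (u - 1) mod (r + 1) = u - 1"
    by (rule div_mult_mod_eq)+
  show "(u - 1) div (r + 1) \<noteq> (v - 1) div (r + 1)"
  proof
    assume same: "(u - 1) div (r + 1) = (v - 1) div (r + 1)"
    have "(v - 1) mod (r + 1) < r + 1"
      by simp
    then show False
      using far v u[unfolded same] by linarith
  qed
qed

lemma block_index_image_independent_cycpow: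
  assumes "independent (cycpow_edge ((r+1)*d) r) I" "I \<subseteq> {1..(r+1)*d}" "d \<le> card I"
  shows "(\<lambda>v. (v - 1) div (r + 1)) ` I = {..<d}"
proof (rule card_seteq)
  show "(\<lambda>v. (v - 1) div (r + 1)) ` I \<subseteq> {..<d}"
  proof (intro image_subsetI)
    fix v assume "v \<in> I"
    then have "1 \<le> v" "v \<le> d * (r + 1)"
      using assms(2) by (auto simp: algebra_simps)
    then have "v - 1 < d * (r + 1)"
      by linarith
    then show "(v - 1) div (r + 1) \<in> {..<d}"
      by (simp add: less_mult_imp_div_less)
  qed
  have "card ((\<lambda>v. (v - 1) div (r + 1)) ` I) = card I"
    using inj_on_block_index[OF assms(1,2)] by (rule card_image)
  then show "card {..<d} \<le> card ((\<lambda>v. (v - 1) div (r + 1)) ` I)"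
    using assms(3) by simp
qed simp

lemma independent_cycpow_offset_mono:
  assumes "independent (cycpow_edge n r) I" "I \<subseteq> {1..n}"
    and "k * (r + 1) + a + 1 \<in> I" "(k + 1) * (r + 1) + b + 1 \<in> I" "a \<le> r"
  shows "a \<le> b"
proof -
  have split: "(k + 1) * (r + 1) = k * (r + 1) + (r + 1)"
    by (simp add: algebra_simps)
  then have "k * (r + 1) + a + 1 < (k + 1) * (r + 1) + b + 1"
    using \<open>a \<le> r\<close> by linarith
  then have "r < ((k + 1) * (r + 1) + b + 1) - (k * (r + 1) + a + 1)"
    using independent_cycpow_gap[OF assms(1-4)] by blast
  then show ?thesis
    using split by linarith
qed

lemma independent_cycpow_offset_wrap:
  assumes "independent (cycpow_edge ((r+1)*d) r) I" "I \<subseteq> {1..(r+1)*d}"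
    and "a + 1 \<in> I" "(d - 1) * (r + 1) + b + 1 \<in> I" "a \<le> r" "2 \<le> d"
  shows "b \<le> a"
proof -
  define m where "m = d - 2"
  have d: "d = m + 2" and last: "d - 1 = m + 1"
    using \<open>2 \<le> d\<close> by (simp_all add: m_def)
  have n: "(r + 1) * d = (m + 1) * (r + 1) + (r + 1)"
    unfolding d by (simp add: algebra_simps)
  have "r + 1 \<le> (m + 1) * (r + 1)"
    by simp
  then have "a + 1 < (d - 1) * (r + 1) + b + 1"
    unfolding last using \<open>a \<le> r\<close> by linarith
  then have "r < (r + 1) * d - (((d - 1) * (r + 1) + b + 1) - (a + 1))"
    using independent_cycpow_gap[OF assms(1-4)] by blast
  then show ?thesis
    unfolding last n by linarith
qed

(* With one vertex e k = k(r+1) + p k + 1 in each block, the gaps between consecutive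
   vertices force p to be non-decreasing, and the gap across the wrap-around from the last
   block back to the first forces p (d - 1) \<le> p 0; so p is constant. *)

lemma independent_cycpow_contains_residue_class:
  assumes ind: "independent (cycpow_edge ((r+1)*d) r) I" and I: "I \<subseteq> {1..(r+1)*d}"
    and "d \<le> card I" "1 \<le> d"
  shows "\<exists>j\<le>r. residue_class r d j \<subseteq> I"
proof -
  have "\<forall>k\<in>{..<d}. \<exists>v. v \<in> I \<and> k = (v - 1) div (r + 1)"
    unfolding block_index_image_independent_cycpow[OF ind I \<open>d \<le> card I\<close>, symmetric] by blast
  from bchoice[OF this] obtain e where "\<forall>k\<in>{..<d}. e k \<in> I \<and> k = (e k - 1) div (r + 1)"
    by blast
  then have e: "e k \<in> I" "(e k - 1) div (r + 1) = k" if "k < d" for k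
    using that by auto
  define p where "p k = (e k - 1) mod (r + 1)" for k
  have p_le: "p k \<le> r" for k
    by (simp add: p_def)
  have e_eq: "e k = k * (r + 1) + p k + 1" if "k < d" for k
    using e[OF that] I div_mult_mod_eq[of "e k - 1" "r + 1"] by (force simp: p_def)
  have const: "p k = p 0" if "k < d" for k
  proof (rule cyclically_mono_imp_constant[OF _ _ that])
    show "p k \<le> p (Suc k)" if "Suc k < d" for k
    proof (rule independent_cycpow_offset_mono[OF ind I _ _ p_le])
      show "k * (r + 1) + p k + 1 \<in> I"
        using e(1)[of k] e_eq[of k] that by simp
      show "(k + 1) * (r + 1) + p (Suc k) + 1 \<in> I"
        using e(1)[OF that] e_eq[OF that] by simp
    qed
    show "p (d - 1) \<le> p 0"
    proof (cases "d = 1")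
      case False
      then have "0 < d" "d - 1 < d" "2 \<le> d"
        using \<open>1 \<le> d\<close> by simp_all
      have "p 0 + 1 \<in> I"
        using e(1)[OF \<open>0 < d\<close>] e_eq[OF \<open>0 < d\<close>] by simp
      moreover have "(d - 1) * (r + 1) + p (d - 1) + 1 \<in> I"
        using e(1)[OF \<open>d - 1 < d\<close>] e_eq[OF \<open>d - 1 < d\<close>] by simp
      ultimately show ?thesis
        using independent_cycpow_offset_wrap[OF ind I _ _ p_le \<open>2 \<le> d\<close>] by blast
    qed simp
  qed
  have "residue_class r d (p 0) \<subseteq> I"
  proof
    fix v assume "v \<in> residue_class r d (p 0)"
    then obtain k where "k < d" "v = k * (r + 1) + p 0 + 1"
      using residue_class_eq_image[OF p_le] by auto
    then show "v \<in> I"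
      using e(1)[OF \<open>k < d\<close>] e_eq[OF \<open>k < d\<close>] const[OF \<open>k < d\<close>] by simp
  qed
  then show ?thesis
    using p_le by blast
qed

lemma residue_mod_image:
  fixes r d :: nat
  assumes "1 \<le> d"
  shows "(\<lambda>v. (v - 1) mod (r + 1)) ` {1..(r+1)*d} = {..r}"
proof (intro subset_antisym subsetI)
  fix j assume "j \<in> {..r}"
  moreover have "r + 1 \<le> (r + 1) * d"
    using mult_le_mono2[OF assms, where k = "r + 1"] by simp
  ultimately show "j \<in> (\<lambda>v. (v - 1) mod (r + 1)) ` {1..(r+1)*d}"
    by (intro image_eqI[of _ _ "j + 1"]) auto
qed (auto simp: less_Suc_eq_le)

lemma Delta_t_cycpow_eq_missing_colour_complex:
  assumes "1 \<le> d"
  shows "Delta_t d {1..(r+1)*d} (cycpow_edge ((r+1)*d) r) =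
           missing_colour_complex {1..(r+1)*d} (\<lambda>v. (v - 1) mod (r + 1)) r"
proof (intro set_eqI)
  let ?V = "{1..(r+1)*d}" and ?E = "cycpow_edge ((r+1)*d) r"
  let ?c = "\<lambda>v. (v - 1) mod (r + 1)"
  fix \<sigma> :: "nat set"
  have "d \<le> indep_num ?E (?V - \<sigma>) \<longleftrightarrow> (\<exists>j\<le>r. j \<notin> ?c ` \<sigma>)" if "\<sigma> \<subseteq> ?V"
  proof -
    have "d \<le> indep_num ?E (?V - \<sigma>) \<longleftrightarrow> (\<exists>I\<subseteq>?V - \<sigma>. independent ?E I \<and> d \<le> card I)"
      by (simp add: le_indep_num_iff)
    also have "\<dots> \<longleftrightarrow> (\<exists>j\<le>r. residue_class r d j \<subseteq> ?V - \<sigma>)"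
    proof
      assume "\<exists>I\<subseteq>?V - \<sigma>. independent ?E I \<and> d \<le> card I"
      then obtain I where I: "I \<subseteq> ?V - \<sigma>" "independent ?E I" "d \<le> card I"
        by blast
      have "I \<subseteq> ?V"
        using I(1) by blast
      then obtain j where "j \<le> r" "residue_class r d j \<subseteq> I"
        using independent_cycpow_contains_residue_class[OF I(2) _ I(3) assms] by blast
      moreover have "residue_class r d j \<subseteq> ?V - \<sigma>"
        using \<open>residue_class r d j \<subseteq> I\<close> I(1) by (rule subset_trans)
      ultimately show "\<exists>j\<le>r. residue_class r d j \<subseteq> ?V - \<sigma>"
        by blast
    next
      assume "\<exists>j\<le>r. residue_class r d j \<subseteq> ?V - \<sigma>"
      then obtain j where "j \<le> r" "residue_class r d j \<subseteq> ?V - \<sigma>"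
        by blast
      then show "\<exists>I\<subseteq>?V - \<sigma>. independent ?E I \<and> d \<le> card I"
        using independent_residue_class[of r d j] card_residue_class[of j r d]
        by (intro exI[of _ "residue_class r d j"]) simp
    qed
    also have "\<dots> \<longleftrightarrow> (\<exists>j\<le>r. j \<notin> ?c ` \<sigma>)"
    proof -
      have "residue_class r d j \<subseteq> ?V - \<sigma> \<longleftrightarrow> j \<notin> ?c ` \<sigma>" for j
        using that unfolding residue_class_def by blast
      then show ?thesis
        by simp
    qed
    finally show ?thesis .
  qed
  then show "\<sigma> \<in> Delta_t d ?V ?E \<longleftrightarrow> \<sigma> \<in> missing_colour_complex ?V ?c r"
    by (cases "\<sigma> \<subseteq> ?V") (simp_all add: Delta_t_def missing_colour_complex_def)
qed

theorem mainTheorem11: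
  fixes r d :: nat
  assumes "r \<ge> 1" and "d \<ge> 1" and "(r + 1) * d \<ge> 3"
  shows "geom_real_top (Delta_t d {1..(r+1)*d} (cycpow_edge ((r+1)*d) r))
           homotopy_equivalent_space nsphere (r - 1)"
proof -
  obtain p where r: "r = Suc p"
    using assms(1) by (cases r) auto
  have "geom_real_top (Delta_t d {1..(r+1)*d} (cycpow_edge ((r+1)*d) r))
          homotopy_equivalent_space subtopology (powertop_real UNIV) (simplex_boundary r)"
    unfolding Delta_t_cycpow_eq_missing_colour_complex[OF assms(2)]
    by (rule geom_real_missing_colour_complex_homotopy_equivalent
        [OF finite_atLeastAtMost residue_mod_image[OF assms(2)]])
  also have "\<dots> homotopy_equivalent_space nsphere (r - 1)"
    using simplex_boundary_homeomorphic_nsphere[of p] r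
    by (simp add: homeomorphic_imp_homotopy_equivalent_space)
  finally show ?thesis .
qed

end
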